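(* Let $f:E\to\mathbb{R}$ be $L$-smooth (convexity of $f$ is not assumed), let $x^0\in E$, and consider the iterates of Algorithm AGMsDR (with either Option (a) or Option (b) used at every iteration). Then for every $k\ge 0$, $$A_k f(x^k)\le \min_{x\in E}\psi_k(x)=\psi_k(v^k),$$ and moreover $A_k\ge \frac{k^2}{4L}$.
   Context: $E$ is a finite-dimensional real vector space with a norm $\|\cdot\|$; $E^*$ is its dual, $\langle g,x\rangle$ denotes the value of $g\in E^*$ at $x\in E$, and $\|g\|_*=\max\{\langle g,x\rangle:\|x\|\le 1\}$. For $g\in E^*$, $g^{\#}$ denotes a (fixed) element $s\in E$ with $\|s\|\le 1$ and $\langle g,s\rangle=\|g\|_*$. A prox-function $d:E\to\mathbb{R}$ is continuously differentiable, convex, $1$-strongly convex with respect to $\|\cdot\|$ (i.e. $d(y)-d(x)-\langle\nabla d(x),y-x\rangle\ge\frac12\|y-x\|^2$ for all $x,y\in E$) and satisfies $\min_E d=0$; its Bregman divergence is $V(x,z)=d(x)-d(z)-\langle\nabla d(z),x-z\rangle$. A function $f:E\to\mathbb{R}$ is $L$-smooth ($L>0$) if it is continuously differentiable and $\|\nabla f(x)-\nabla f(y)\|_*\le L\|x-y\|$ for all $x,y\in E$. Algorithm AGMsDR (input $x^0\in E$, and $L$ for Option (a)): set $A_0=0$, $v^0=x^0$, $\psi_0(x)=V(x,x^0)$. For $k=0,1,2,\dots$: 1. Choose $\beta_k\in\arg\min_{\beta\in[0,1]} f(v^k+\beta(x^k-v^k))$ (a global minimizer over the interval) and set $y^k=v^k+\beta_k(x^k-v^k)$.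 2. Option (a): $x^{k+1}\in\arg\min_{x\in E}\{f(y^k)+\langle\nabla f(y^k),x-y^k\rangle+\frac L2\|x-y^k\|^2\}$, and $a_{k+1}>0$ solves $\frac{a_{k+1}^2}{A_k+a_{k+1}}=\frac1L$. Option (b): $h_{k+1}\in\arg\min_{h\ge0} f(y^k-h(\nabla f(y^k))^{\#})$, $x^{k+1}=y^k-h_{k+1}(\nabla f(y^k))^{\#}$, and $a_{k+1}$ is the largest solution of $f(y^k)-\frac{a_{k+1}^2}{2(A_k+a_{k+1})}\|\nabla f(y^k)\|_*^2=f(x^{k+1})$. 3. $A_{k+1}=A_k+a_{k+1}$; $\psi_{k+1}(x)=\psi_k(x)+a_{k+1}\{f(y^k)+\langle\nabla f(y^k),x-y^k\rangle\}$; $v^{k+1}=\arg\min_{x\in E}\psi_{k+1}(x)$. It is assumed that all the minima in the algorithm are attained, and that $\nabla f(y^k)\neq 0$ for all iterations considered (otherwise $y^k$ is a stationary point and the method stops). *)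

theory Defs
  imports "HOL-Analysis.Analysis"
begin

text \<open>The space E is modelled by a type 'a of class euclidean_space (a finite-dimensional
real vector space), carrying an ARBITRARY norm nrm (not necessarily the Euclidean one).
The dual space E^* is identified with 'a via the inner product: g acts as x \<mapsto> g \<bullet> x.\<close>

definition is_norm :: "('a::real_vector \<Rightarrow> real) \<Rightarrow> bool" where
  "is_norm nrm \<longleftrightarrow> (\<forall>x. 0 \<le> nrm x) \<and> (\<forall>x. nrm x = 0 \<longleftrightarrow> x = 0)
     \<and> (\<forall>c x. nrm (c *\<^sub>R x) = \<bar>c\<bar> * nrm x) \<and> (\<forall>x y. nrm (x + y) \<le> nrm x + nrm y)"

definition dual_norm :: "('a::real_inner \<Rightarrow> real) \<Rightarrow> 'a \<Rightarrow> real" where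
  "dual_norm nrm g = Sup {g \<bullet> x | x. nrm x \<le> 1}"

definition is_sharp :: "('a::real_inner \<Rightarrow> real) \<Rightarrow> ('a \<Rightarrow> 'a) \<Rightarrow> bool" where
  "is_sharp nrm sh \<longleftrightarrow> (\<forall>g. nrm (sh g) \<le> 1 \<and> g \<bullet> sh g = dual_norm nrm g)"

definition is_prox :: "('a::euclidean_space \<Rightarrow> real) \<Rightarrow> ('a \<Rightarrow> real) \<Rightarrow> ('a \<Rightarrow> 'a) \<Rightarrow> bool" where
  "is_prox nrm d gd \<longleftrightarrow>
     (\<forall>x. (d has_derivative (\<lambda>h. gd x \<bullet> h)) (at x)) \<and> continuous_on UNIV gd
     \<and> convex_on UNIV d
     \<and> (\<forall>x y. d y - d x - gd x \<bullet> (y - x) \<ge> (1/2) * (nrm (y - x))\<^sup>2)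
     \<and> (\<exists>x. d x = 0) \<and> (\<forall>x. d x \<ge> 0)"

definition bregman :: "('a::real_inner \<Rightarrow> real) \<Rightarrow> ('a \<Rightarrow> 'a) \<Rightarrow> 'a \<Rightarrow> 'a \<Rightarrow> real" where
  "bregman d gd x z = d x - d z - gd z \<bullet> (x - z)"

definition L_smooth :: "('a::euclidean_space \<Rightarrow> real) \<Rightarrow> real \<Rightarrow> ('a \<Rightarrow> real) \<Rightarrow> ('a \<Rightarrow> 'a) \<Rightarrow> bool" where
  "L_smooth nrm L f gf \<longleftrightarrow> L > 0 \<and>
     (\<forall>x. (f has_derivative (\<lambda>h. gf x \<bullet> h)) (at x)) \<and> continuous_on UNIV gf
     \<and> (\<forall>x y. dual_norm nrm (gf x - gf y) \<le> L * nrm (x - y))"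

end

theory Submission
  imports Defs
begin

text \<open>Each \<open>\<psi>\<^sub>k\<close> is the prox-function plus an affine function, so strong convexity gives the
  quadratic growth \<open>\<psi>\<^sub>k z \<ge> \<psi>\<^sub>k v\<^sup>k + \<parallel>z - v\<^sup>k\<parallel>\<^sup>2 / 2\<close>. The exact line search for
  \<open>y\<^sup>k\<close> yields \<open>f y\<^sup>k \<le> f x\<^sup>k\<close> and \<open>\<langle>\<nabla>f y\<^sup>k, v\<^sup>k - y\<^sup>k\<rangle> \<ge> 0\<close>, and comparison with the step
  \<open>y - (\<parallel>g\<parallel>\<^sub>* / L) g\<^sup>#\<close> in the quadratic upper bound of an \<open>L\<close>-smooth function shows that both
  options decrease \<open>f\<close> by at least \<open>a\<^sub>k\<^sub>+\<^sub>1\<^sup>2 \<parallel>g\<parallel>\<^sub>*\<^sup>2 / (2 A\<^sub>k\<^sub>+\<^sub>1)\<close> with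
  \<open>A\<^sub>k\<^sub>+\<^sub>1 \<le> L a\<^sub>k\<^sub>+\<^sub>1\<^sup>2\<close>. In the induction step for \<open>A\<^sub>k f x\<^sup>k \<le> \<psi>\<^sub>k v\<^sup>k\<close> the quadratic growth
  absorbs the linear term \<open>a \<langle>g, v\<^sup>k\<^sup>+\<^sup>1 - v\<^sup>k\<rangle>\<close> at the cost \<open>a\<^sup>2 \<parallel>g\<parallel>\<^sub>*\<^sup>2 / 2\<close>, which is exactly
  what the decrease of \<open>f\<close> pays for. Finally \<open>A\<^sub>k\<^sub>+\<^sub>1 \<le> L (A\<^sub>k\<^sub>+\<^sub>1 - A\<^sub>k)\<^sup>2\<close> forces
  \<open>\<surd>A\<^sub>k\<^sub>+\<^sub>1 \<ge> \<surd>A\<^sub>k + 1 / (2\<surd>L)\<close>.\<close>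

section \<open>Arbitrary norms and their duals\<close>

lemma is_norm_zero:
  assumes "is_norm nrm"
  shows "nrm 0 = 0"
  using assms unfolding is_norm_def by blast

lemma is_norm_minus:
  assumes "is_norm nrm"
  shows "nrm (- x) = nrm x"
  using assms unfolding is_norm_def by (metis abs_minus_cancel abs_one mult_1 scaleR_minus1_left)

lemma convex_on_is_norm:
  assumes "is_norm nrm"
  shows "convex_on UNIV nrm"
proof
  fix t :: real and x y assume "0 < t" "t < 1"
  then show "nrm ((1 - t) *\<^sub>R x + t *\<^sub>R y) \<le> (1 - t) * nrm x + t * nrm y"
    using assms unfolding is_norm_def by (metis abs_of_pos diff_gt_0_iff_gt)
qed simp

lemma is_norm_ge_mult_norm:
  fixes nrm :: "'a::euclidean_space \<Rightarrow> real"
  assumes "is_norm nrm"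
  obtains m where "m > 0" "\<And>x. m * norm x \<le> nrm x"
proof -
  have cont: "continuous_on (sphere 0 1) nrm"
    using convex_on_continuous[OF open_UNIV convex_on_is_norm[OF assms]]
    by (rule continuous_on_subset) simp
  obtain b :: 'a where "b \<in> Basis" using nonempty_Basis by blast
  then have "sphere (0::'a) 1 \<noteq> {}" by force
  then obtain z :: 'a where z: "z \<in> sphere 0 1" "\<And>u. u \<in> sphere 0 1 \<Longrightarrow> nrm z \<le> nrm u"
    using continuous_attains_inf[OF compact_sphere _ cont] by blast
  have "nrm z > 0"
    using z(1) assms unfolding is_norm_def by (metis less_eq_real_def norm_zero mem_sphere_0 zero_neq_one)
  moreover have "nrm z * norm x \<le> nrm x" for x
  proof (cases "x = 0")
    case False
    then have "nrm z \<le> nrm ((1 / norm x) *\<^sub>R x)" by (intro z(2)) simp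
    also have "\<dots> = nrm x / norm x" using assms unfolding is_norm_def by simp
    finally show ?thesis using False by (simp add: field_simps)
  qed (use assms in \<open>simp add: is_norm_def\<close>)
  ultimately show thesis by (rule that)
qed

lemma bdd_above_dual_norm_set:
  fixes nrm :: "'a::euclidean_space \<Rightarrow> real"
  assumes "is_norm nrm"
  shows "bdd_above {g \<bullet> x | x. nrm x \<le> 1}"
proof -
  obtain m where m: "m > 0" "\<And>x. m * norm x \<le> nrm x"
    using is_norm_ge_mult_norm[OF assms] by blast
  have "g \<bullet> x \<le> norm g / m" if "nrm x \<le> 1" for x
  proof -
    have "norm x \<le> 1 / m" using m(2)[of x] that m(1) by (simp add: field_simps)
    then have "norm g * norm x \<le> norm g / m" by (simp add: mult_left_mono divide_inverse)
    then show ?thesis using Cauchy_Schwarz_ineq2[of g x] by simp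
  qed
  then show ?thesis unfolding bdd_above_def by blast
qed

lemma inner_le_dual_norm:
  fixes nrm :: "'a::euclidean_space \<Rightarrow> real"
  assumes "is_norm nrm" "nrm u \<le> 1"
  shows "g \<bullet> u \<le> dual_norm nrm g"
  unfolding dual_norm_def using assms(2) by (intro cSup_upper bdd_above_dual_norm_set[OF assms(1)]) blast

lemma dual_norm_nonneg:
  fixes nrm :: "'a::euclidean_space \<Rightarrow> real"
  assumes "is_norm nrm"
  shows "0 \<le> dual_norm nrm g"
  using inner_le_dual_norm[OF assms, of 0 g] is_norm_zero[OF assms] by simp

lemma inner_le_dual_norm_mult:
  fixes nrm :: "'a::euclidean_space \<Rightarrow> real"
  assumes "is_norm nrm"
  shows "g \<bullet> w \<le> dual_norm nrm g * nrm w"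
proof (cases "w = 0")
  case True
  then show ?thesis using dual_norm_nonneg[OF assms] is_norm_zero[OF assms] by simp
next
  case False
  then have pos: "nrm w > 0" using assms unfolding is_norm_def by (metis less_eq_real_def)
  then have "g \<bullet> ((1 / nrm w) *\<^sub>R w) \<le> dual_norm nrm g"
    using assms by (intro inner_le_dual_norm) (simp_all add: is_norm_def)
  then show ?thesis using pos by (simp add: field_simps)
qed

lemma dual_norm_pos:
  fixes nrm :: "'a::euclidean_space \<Rightarrow> real"
  assumes "is_norm nrm" "g \<noteq> 0"
  shows "0 < dual_norm nrm g"
proof -
  have "0 < g \<bullet> g" using assms(2) by simp
  also have "\<dots> \<le> dual_norm nrm g * nrm g" by (rule inner_le_dual_norm_mult[OF assms(1)])
  finally show ?thesis
    using assms(1) unfolding is_norm_def by (metis mult_nonpos_nonneg not_le order.asym)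
qed

section \<open>Smooth functions\<close>

lemma has_real_derivative_along_line:
  fixes f :: "'a::real_inner \<Rightarrow> real"
  assumes "(f has_derivative (\<lambda>h. g \<bullet> h)) (at (p + t *\<^sub>R w))"
  shows "((\<lambda>s. f (p + s *\<^sub>R w)) has_real_derivative g \<bullet> w) (at t)"
proof -
  have "((\<lambda>s. p + s *\<^sub>R w) has_derivative (\<lambda>s. s *\<^sub>R w)) (at t)"
    by (auto intro!: derivative_eq_intros)
  from has_derivative_compose[OF this assms]
  have "((\<lambda>s. f (p + s *\<^sub>R w)) has_derivative (\<lambda>s. s * (g \<bullet> w))) (at t)" by simp
  moreover have "(\<lambda>s. s * (g \<bullet> w)) = (*) (g \<bullet> w)" by (auto simp: mult.commute)
  ultimately show ?thesis unfolding has_field_derivative_def by simp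
qed

lemma inner_nonneg_if_min_on_segment:
  fixes f :: "'a::real_inner \<Rightarrow> real"
  assumes "(f has_derivative (\<lambda>h. g \<bullet> h)) (at p)"
    and "\<And>s. 0 \<le> s \<Longrightarrow> s \<le> 1 \<Longrightarrow> f p \<le> f (p + s *\<^sub>R w)"
  shows "0 \<le> g \<bullet> w"
proof (rule ccontr)
  assume "\<not> 0 \<le> g \<bullet> w"
  then have neg: "g \<bullet> w < 0" by simp
  have "((\<lambda>s. f (p + s *\<^sub>R w)) has_real_derivative g \<bullet> w) (at 0)"
    using has_real_derivative_along_line[of f g p 0 w] assms(1) by simp
  from DERIV_neg_dec_right[OF this neg]
  obtain e where e: "e > 0" "\<forall>s>0. s < e \<longrightarrow> f (p + s *\<^sub>R w) < f p"
    by auto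
  define s where "s = min (e / 2) 1"
  have "0 < s" "s < e" "s \<le> 1" using e(1) unfolding s_def by auto
  then show False using e(2) assms(2)[of s] by force
qed

lemma L_smooth_upper_bound:
  fixes f :: "'a::euclidean_space \<Rightarrow> real"
  assumes norm: "is_norm nrm" and smooth: "L_smooth nrm L f gf"
  shows "f x \<le> f y + gf y \<bullet> (x - y) + L / 2 * (nrm (x - y))\<^sup>2"
proof -
  define w where "w = x - y"
  define \<phi> where "\<phi> t = f (y + t *\<^sub>R w) - t * (gf y \<bullet> w) - L / 2 * t\<^sup>2 * (nrm w)\<^sup>2" for t
  have deriv_f: "(f has_derivative (\<lambda>h. gf p \<bullet> h)) (at p)" for p
    using smooth unfolding L_smooth_def by blast
  have deriv_\<phi>: "(\<phi> has_real_derivative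
      (gf (y + t *\<^sub>R w) - gf y) \<bullet> w - L * t * (nrm w)\<^sup>2) (at t)" for t
    unfolding \<phi>_def
    by (rule derivative_eq_intros has_real_derivative_along_line deriv_f refl)+
      (simp add: power2_eq_square algebra_simps inner_diff_left)
  \<comment> \<open>The Lipschitz bound on the gradient makes \<open>\<phi>\<close> nonincreasing on \<open>[0, 1]\<close>.\<close>
  have "\<exists>d. (\<phi> has_real_derivative d) (at t) \<and> d \<le> 0" if "0 < t" for t
  proof -
    have "(gf (y + t *\<^sub>R w) - gf y) \<bullet> w \<le> dual_norm nrm (gf (y + t *\<^sub>R w) - gf y) * nrm w"
      by (rule inner_le_dual_norm_mult[OF norm])
    also have "\<dots> \<le> L * nrm (t *\<^sub>R w) * nrm w"
    proof (rule mult_right_mono)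
      show "dual_norm nrm (gf (y + t *\<^sub>R w) - gf y) \<le> L * nrm (t *\<^sub>R w)"
        using smooth unfolding L_smooth_def by (metis add_diff_cancel_left')
    qed (use norm in \<open>simp add: is_norm_def\<close>)
    also have "\<dots> = L * t * (nrm w)\<^sup>2"
      using norm that unfolding is_norm_def by (simp add: power2_eq_square)
    finally show ?thesis using deriv_\<phi>[of t] by auto
  qed
  moreover have "continuous_on {0..1} \<phi>"
    using deriv_\<phi> by (meson DERIV_isCont continuous_at_imp_continuous_on)
  ultimately have "\<phi> 1 \<le> \<phi> 0"
    by (intro DERIV_nonpos_imp_decreasing_open[of 0 1]) auto
  then show ?thesis unfolding \<phi>_def w_def by simp
qed

lemma sharp_step_quadratic_model:
  fixes g y :: "'a::euclidean_space"
  assumes norm: "is_norm nrm" and sharp: "is_sharp nrm sh" and L: "L > 0"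
  defines "z \<equiv> y - (dual_norm nrm g / L) *\<^sub>R sh g"
  shows "g \<bullet> (z - y) + L / 2 * (nrm (z - y))\<^sup>2 \<le> - (dual_norm nrm g)\<^sup>2 / (2 * L)"
proof -
  define D where "D = dual_norm nrm g"
  have D: "0 \<le> D" unfolding D_def by (rule dual_norm_nonneg[OF norm])
  have "nrm (z - y) = D / L * nrm (sh g)"
    using is_norm_minus[OF norm] norm D L unfolding z_def D_def is_norm_def by (simp add: abs_of_nonneg)
  also have "\<dots> \<le> D / L"
    using sharp D L unfolding is_sharp_def by (simp add: divide_right_mono mult_left_le)
  finally have "(nrm (z - y))\<^sup>2 \<le> (D / L)\<^sup>2"
    using norm unfolding is_norm_def by (simp add: power_mono)
  then have "L / 2 * (nrm (z - y))\<^sup>2 \<le> L / 2 * (D / L)\<^sup>2" using L by simp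
  moreover have "g \<bullet> (z - y) = - D * D / L"
    using sharp unfolding z_def D_def is_sharp_def by simp
  moreover have "- D * D / L + L / 2 * (D / L)\<^sup>2 = - D\<^sup>2 / (2 * L)"
    using L by (simp add: power2_eq_square field_simps)
  ultimately have "g \<bullet> (z - y) + L / 2 * (nrm (z - y))\<^sup>2 \<le> - D\<^sup>2 / (2 * L)" by linarith
  then show ?thesis unfolding D_def .
qed

section \<open>One iteration of the method\<close>

lemma option_a_decrease:
  fixes f :: "'a::euclidean_space \<Rightarrow> real"
  assumes norm: "is_norm nrm" and sharp: "is_sharp nrm sh" and smooth: "L_smooth nrm L f gf"
    and "0 \<le> A" and "0 < a" and weight: "a\<^sup>2 / (A + a) = 1 / L"
    and model_min: "\<forall>z. f y + gf y \<bullet> (x' - y) + L / 2 * (nrm (x' - y))\<^sup>2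
                          \<le> f y + gf y \<bullet> (z - y) + L / 2 * (nrm (z - y))\<^sup>2"
  shows "0 < a \<and> A + a \<le> L * a\<^sup>2 \<and> f x' \<le> f y - a\<^sup>2 / (2 * (A + a)) * (dual_norm nrm (gf y))\<^sup>2"
proof -
  define z where "z = y - (dual_norm nrm (gf y) / L) *\<^sub>R sh (gf y)"
  have L: "L > 0" using smooth unfolding L_smooth_def by blast
  have "f x' \<le> f y + gf y \<bullet> (x' - y) + L / 2 * (nrm (x' - y))\<^sup>2"
    by (rule L_smooth_upper_bound[OF norm smooth])
  also have "\<dots> \<le> f y + gf y \<bullet> (z - y) + L / 2 * (nrm (z - y))\<^sup>2"
    using model_min by blast
  also have "\<dots> \<le> f y - (dual_norm nrm (gf y))\<^sup>2 / (2 * L)"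
    using sharp_step_quadratic_model[OF norm sharp L, of "gf y" y] unfolding z_def by simp
  finally have decrease: "f x' \<le> f y - (dual_norm nrm (gf y))\<^sup>2 / (2 * L)" .
  have "A + a > 0" using \<open>0 \<le> A\<close> \<open>0 < a\<close> by simp
  then have "A + a = L * a\<^sup>2" using weight L by (simp add: field_simps)
  then show ?thesis using decrease \<open>0 < a\<close> L by (simp add: field_simps)
qed

text \<open>For \<open>c > 0\<close> and \<open>A \<ge> 0\<close> the equation \<open>b\<^sup>2 = c (A + b)\<close> has the positive root
  \<open>(c + \<surd>(c\<^sup>2 + 4cA)) / 2\<close>, so its largest solution is positive.\<close>

lemma largest_root_weight_bound:
  fixes A a c L :: real
  assumes "0 \<le> A" "0 < L" "1 / L \<le> c" and root: "a\<^sup>2 / (A + a) = c"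
    and largest: "\<And>b. b\<^sup>2 / (A + b) = c \<Longrightarrow> b \<le> a"
  shows "0 < a \<and> A + a \<le> L * a\<^sup>2"
proof -
  have "0 < 1 / L" using assms(2) by simp
  with assms(3) have c: "c > 0" by linarith
  define b where "b = (c + sqrt (c\<^sup>2 + 4 * c * A)) / 2"
  have "0 \<le> sqrt (c\<^sup>2 + 4 * c * A)" using c assms(1) by simp
  then have b: "b > 0" unfolding b_def using add_pos_nonneg[OF c] by simp
  have "(sqrt (c\<^sup>2 + 4 * c * A))\<^sup>2 = c\<^sup>2 + 4 * c * A" using c assms(1) by simp
  then have "b\<^sup>2 = c * (A + b)" unfolding b_def by (simp add: power2_eq_square algebra_simps)
  then have "b\<^sup>2 / (A + b) = c" using b assms(1) by (simp add: field_simps)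
  then have a: "0 < a" using largest b by fastforce
  then have "a\<^sup>2 = c * (A + a)" using root assms(1) by (simp add: field_simps)
  moreover have "(A + a) / L \<le> c * (A + a)"
    using mult_right_mono[OF assms(3), of "A + a"] a assms(1) by simp
  ultimately show ?thesis using a assms(2) by (simp add: field_simps)
qed

lemma option_b_decrease:
  fixes f :: "'a::euclidean_space \<Rightarrow> real"
  assumes norm: "is_norm nrm" and sharp: "is_sharp nrm sh" and smooth: "L_smooth nrm L f gf"
    and "gf y \<noteq> 0" and "0 \<le> A"
    and line_search: "\<forall>t. t \<ge> 0 \<longrightarrow> f (y - h *\<^sub>R sh (gf y)) \<le> f (y - t *\<^sub>R sh (gf y))"
    and x': "x' = y - h *\<^sub>R sh (gf y)"
    and root: "f y - a\<^sup>2 / (2 * (A + a)) * (dual_norm nrm (gf y))\<^sup>2 = f x'"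
    and largest: "\<forall>b. f y - b\<^sup>2 / (2 * (A + b)) * (dual_norm nrm (gf y))\<^sup>2 = f x' \<longrightarrow> b \<le> a"
  shows "0 < a \<and> A + a \<le> L * a\<^sup>2 \<and> f x' \<le> f y - a\<^sup>2 / (2 * (A + a)) * (dual_norm nrm (gf y))\<^sup>2"
proof -
  define D where "D = dual_norm nrm (gf y)"
  have L: "L > 0" using smooth unfolding L_smooth_def by blast
  have D: "D > 0" unfolding D_def using dual_norm_pos[OF norm \<open>gf y \<noteq> 0\<close>] .
  have "f x' \<le> f (y - (D / L) *\<^sub>R sh (gf y))"
    using line_search D L unfolding x' by simp
  also have "\<dots> \<le> f y + gf y \<bullet> ((y - (D / L) *\<^sub>R sh (gf y)) - y)
                      + L / 2 * (nrm ((y - (D / L) *\<^sub>R sh (gf y)) - y))\<^sup>2"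
    by (rule L_smooth_upper_bound[OF norm smooth])
  also have "\<dots> \<le> f y - D\<^sup>2 / (2 * L)"
    using sharp_step_quadratic_model[OF norm sharp L, of "gf y" y] unfolding D_def by simp
  finally have "1 / L \<le> 2 * (f y - f x') / D\<^sup>2"
    using D L by (simp add: field_simps)
  moreover have rescale: "f y - b\<^sup>2 / (2 * (A + b)) * D\<^sup>2 = f x' \<longleftrightarrow>
      b\<^sup>2 / (A + b) = 2 * (f y - f x') / D\<^sup>2" for b
  proof -
    have scale: "f y - q / 2 * D\<^sup>2 = f x' \<longleftrightarrow> q = 2 * (f y - f x') / D\<^sup>2" for q
      using D by (auto simp: field_simps)
    have halve: "b\<^sup>2 / (2 * (A + b)) = b\<^sup>2 / (A + b) / 2" by (simp add: mult.commute)
    show ?thesis unfolding halve by (rule scale)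
  qed
  ultimately have "0 < a \<and> A + a \<le> L * a\<^sup>2"
    using root largest unfolding D_def[symmetric] rescale
    by (intro largest_root_weight_bound[OF \<open>0 \<le> A\<close> L]) blast+
  then show ?thesis using root by simp
qed

lemma sqrt_add_ge_if_le_mult_square:
  fixes A a L :: real
  assumes "0 \<le> A" "0 < a" "0 < L" "A + a \<le> L * a\<^sup>2"
  shows "sqrt A + 1 / (2 * sqrt L) \<le> sqrt (A + a)"
proof -
  define s s' where "s = sqrt A" and "s' = sqrt (A + a)"
  have "s' > 0" "s \<le> s'" unfolding s_def s'_def using assms(1,2) by auto
  have "sqrt ((A + a) / L) \<le> sqrt (a\<^sup>2)"
    using assms(3,4) by (intro real_sqrt_le_mono) (simp add: pos_divide_le_eq mult.commute)
  then have "s' / sqrt L \<le> a" unfolding s'_def using assms(2) by (simp add: real_sqrt_divide)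
  also have "a = (s' - s) * (s' + s)"
    unfolding s_def s'_def using assms(1,2) by (simp add: algebra_simps flip: power2_eq_square)
  also have "\<dots> \<le> (s' - s) * (2 * s')" using \<open>s \<le> s'\<close> by (intro mult_left_mono) auto
  finally have "s' * (1 / sqrt L) \<le> s' * (2 * (s' - s))" by (simp add: algebra_simps)
  then have "1 / sqrt L \<le> 2 * (s' - s)" using \<open>s' > 0\<close> by (rule mult_left_le_imp_le)
  then show ?thesis unfolding s_def s'_def by simp
qed

lemma min_of_prox_plus_linear_growth:
  fixes d :: "'a::real_inner \<Rightarrow> real"
  assumes deriv: "(d has_derivative (\<lambda>h. gd v \<bullet> h)) (at v)"
    and strongly_convex: "\<And>z. 1 / 2 * (nrm (z - v))\<^sup>2 \<le> d z - d v - gd v \<bullet> (z - v)"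
    and min: "\<And>z. d v + G \<bullet> v \<le> d z + G \<bullet> z"
  shows "d v + G \<bullet> v + 1 / 2 * (nrm (z - v))\<^sup>2 \<le> d z + G \<bullet> z"
proof -
  have "((\<lambda>z. d z + G \<bullet> z) has_derivative (\<lambda>h. gd v \<bullet> h + G \<bullet> h)) (at v)"
    by (intro has_derivative_add deriv has_derivative_inner_right has_derivative_ident)
  then have "(\<lambda>h. gd v \<bullet> h + G \<bullet> h) = (\<lambda>h. 0)"
    using min by (intro differential_zero_maxmin[of v UNIV]) auto
  from fun_cong[OF this, of "gd v + G"] have "G = - gd v"
    by (simp flip: inner_add_left add: add_eq_0_iff)
  then show ?thesis using strongly_convex[of z] by (simp add: inner_diff_right)
qed

lemma estimate_sequence_step:
  fixes nrm :: "'a::euclidean_space \<Rightarrow> real"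
  assumes norm: "is_norm nrm"
    and growth: "\<psi> v + 1 / 2 * (nrm (v' - v))\<^sup>2 \<le> \<psi> v'"
    and invariant: "A * f x \<le> \<psi> v"
    and "f y \<le> f x" and toward_v: "0 \<le> g \<bullet> (v - y)" and "0 \<le> A" and "0 < a"
    and decrease: "f x' \<le> f y - a\<^sup>2 / (2 * (A + a)) * (dual_norm nrm g)\<^sup>2"
  shows "(A + a) * f x' \<le> \<psi> v' + a * (f y + g \<bullet> (v' - y))"
proof -
  define D n where "D = dual_norm nrm g" and "n = nrm (v' - v)"
  have "0 \<le> D" "0 \<le> n" unfolding D_def n_def using dual_norm_nonneg[OF norm] norm
    by (auto simp: is_norm_def)
  have "- (g \<bullet> (v' - v)) \<le> D * n"
    using inner_le_dual_norm_mult[OF norm, of g "v - v'"] is_norm_minus[OF norm, of "v' - v"]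
    unfolding D_def n_def by (simp add: inner_diff_right)
  then have "- (a * D * n) \<le> a * (g \<bullet> (v' - v))"
    using mult_left_mono[of "- (g \<bullet> (v' - v))" "D * n" a] \<open>0 < a\<close> by simp
  moreover have "a * D * n \<le> 1 / 2 * n\<^sup>2 + a\<^sup>2 * D\<^sup>2 / 2"
    using sum_squares_ge_zero[of "n - a * D" 0] by (simp add: power2_eq_square algebra_simps)
  moreover have "0 \<le> a * (g \<bullet> (v - y))" using toward_v \<open>0 < a\<close> by simp
  moreover have "A * f y \<le> A * f x" using \<open>f y \<le> f x\<close> \<open>0 \<le> A\<close> by (rule mult_left_mono)
  moreover have "(A + a) * f x' \<le> (A + a) * f y - a\<^sup>2 * D\<^sup>2 / 2"
  proof -
    have "A + a > 0" using \<open>0 \<le> A\<close> \<open>0 < a\<close> by simp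
    then have "(A + a) * (f y - a\<^sup>2 / (2 * (A + a)) * D\<^sup>2) = (A + a) * f y - a\<^sup>2 * D\<^sup>2 / 2"
      by (simp add: field_simps)
    then show ?thesis
      using mult_left_mono[OF decrease, of "A + a"] \<open>A + a > 0\<close> unfolding D_def by simp
  qed
  moreover have "g \<bullet> (v' - y) = g \<bullet> (v - y) + g \<bullet> (v' - v)" by (simp add: inner_diff_right)
  ultimately show ?thesis
    using growth invariant unfolding n_def by (simp add: algebra_simps)
qed

text \<open>Both options for computing \<open>x\<^sub>k\<^sub>+\<^sub>1\<close> and \<open>a\<^sub>k\<^sub>+\<^sub>1\<close> enter only through the assumption
  \<open>decrease\<close>.\<close>

locale agmsdr =
  fixes nrm :: "'a::euclidean_space \<Rightarrow> real"
    and d :: "'a \<Rightarrow> real" and gd :: "'a \<Rightarrow> 'a"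
    and f :: "'a \<Rightarrow> real" and gf :: "'a \<Rightarrow> 'a" and L :: real
    and x v y :: "nat \<Rightarrow> 'a"
    and A a \<beta> :: "nat \<Rightarrow> real"
    and \<psi> :: "nat \<Rightarrow> 'a \<Rightarrow> real"
  assumes norm: "is_norm nrm"
    and prox: "is_prox nrm d gd"
    and smooth: "L_smooth nrm L f gf"
    and A0: "A 0 = 0"
    and v0: "v 0 = x 0"
    and psi0: "\<psi> 0 = (\<lambda>z. bregman d gd z (x 0))"
    and beta: "\<And>k. 0 \<le> \<beta> k \<and> \<beta> k \<le> 1 \<and>
                 (\<forall>b. 0 \<le> b \<and> b \<le> 1 \<longrightarrow>
                    f (v k + \<beta> k *\<^sub>R (x k - v k)) \<le> f (v k + b *\<^sub>R (x k - v k)))"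
    and ydef: "\<And>k. y k = v k + \<beta> k *\<^sub>R (x k - v k)"
    and decrease: "\<And>k. 0 \<le> A k \<Longrightarrow> 0 < a (Suc k) \<and> A k + a (Suc k) \<le> L * (a (Suc k))\<^sup>2
       \<and> f (x (Suc k)) \<le> f (y k) - (a (Suc k))\<^sup>2 / (2 * (A k + a (Suc k))) * (dual_norm nrm (gf (y k)))\<^sup>2"
    and Asuc: "\<And>k. A (Suc k) = A k + a (Suc k)"
    and psisuc: "\<And>k. \<psi> (Suc k) = (\<lambda>z. \<psi> k z + a (Suc k) * (f (y k) + gf (y k) \<bullet> (z - y k)))"
    and vsuc: "\<And>k. \<forall>z. \<psi> (Suc k) (v (Suc k)) \<le> \<psi> (Suc k) z"
begin

lemma L_pos: "L > 0"
  using smooth unfolding L_smooth_def by blast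

lemma psi_eq_prox_plus_affine: "\<exists>c G. \<psi> k = (\<lambda>z. d z + c + G \<bullet> z)"
proof (induction k)
  case 0
  show ?case
    by (intro exI[of _ "gd (x 0) \<bullet> x 0 - d (x 0)"] exI[of _ "- gd (x 0)"])
      (auto simp: psi0 bregman_def inner_diff_right)
next
  case (Suc k)
  then obtain c G where "\<psi> k = (\<lambda>z. d z + c + G \<bullet> z)" by blast
  then show ?case
    by (intro exI[of _ "c + a (Suc k) * (f (y k) - gf (y k) \<bullet> y k)"] exI[of _ "G + a (Suc k) *\<^sub>R gf (y k)"])
      (auto simp: psisuc inner_diff_right inner_add_left algebra_simps)
qed

lemma v_minimizes_psi: "\<psi> k (v k) \<le> \<psi> k z"
proof (cases k)
  case 0
  have "1 / 2 * (nrm (z - x 0))\<^sup>2 \<le> bregman d gd z (x 0)"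
    using prox unfolding is_prox_def bregman_def by blast
  then have "0 \<le> bregman d gd z (x 0)" by (rule order_trans[rotated]) simp
  then show ?thesis using 0 by (simp add: psi0 v0 bregman_def)
qed (use vsuc in blast)

lemma psi_quadratic_growth: "\<psi> k (v k) + 1 / 2 * (nrm (z - v k))\<^sup>2 \<le> \<psi> k z"
proof -
  obtain c G where \<psi>: "\<psi> k = (\<lambda>z. d z + c + G \<bullet> z)" using psi_eq_prox_plus_affine by blast
  have "d (v k) + G \<bullet> v k + 1 / 2 * (nrm (z - v k))\<^sup>2 \<le> d z + G \<bullet> z"
  proof (rule min_of_prox_plus_linear_growth)
    show "(d has_derivative (\<lambda>h. gd (v k) \<bullet> h)) (at (v k))"
      using prox unfolding is_prox_def by blast
    show "1 / 2 * (nrm (z - v k))\<^sup>2 \<le> d z - d (v k) - gd (v k) \<bullet> (z - v k)" for z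
      using prox unfolding is_prox_def by simp
    show "d (v k) + G \<bullet> v k \<le> d z + G \<bullet> z" for z
      using v_minimizes_psi[of k z] unfolding \<psi> by simp
  qed
  then show ?thesis unfolding \<psi> by simp
qed

lemma psi_min_eq_Inf: "\<psi> k (v k) = (INF z. \<psi> k z)"
  by (rule cInf_eq_minimum[symmetric]) (auto intro: v_minimizes_psi)

lemma f_y_le_f_x: "f (y k) \<le> f (x k)"
proof -
  have "f (v k + \<beta> k *\<^sub>R (x k - v k)) \<le> f (v k + 1 *\<^sub>R (x k - v k))"
    using beta[of k] zero_le_one order_refl by blast
  then show ?thesis by (simp add: ydef)
qed

lemma gradient_y_toward_v_nonneg: "0 \<le> gf (y k) \<bullet> (v k - y k)"
proof (rule inner_nonneg_if_min_on_segment)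
  show "(f has_derivative (\<lambda>h. gf (y k) \<bullet> h)) (at (y k))"
    using smooth unfolding L_smooth_def by blast
  fix s :: real assume "0 \<le> s" "s \<le> 1"
  then have "0 \<le> (1 - s) * \<beta> k" "(1 - s) * \<beta> k \<le> 1"
    using beta[of k] by (auto simp: mult_le_one)
  then have "f (y k) \<le> f (v k + ((1 - s) * \<beta> k) *\<^sub>R (x k - v k))"
    unfolding ydef using beta[of k] by blast
  moreover have "y k + s *\<^sub>R (v k - y k) = v k + ((1 - s) * \<beta> k) *\<^sub>R (x k - v k)"
    by (simp add: ydef algebra_simps)
  ultimately show "f (y k) \<le> f (y k + s *\<^sub>R (v k - y k))" by simp
qed

lemma A_nonneg_and_estimate: "0 \<le> A k \<and> A k * f (x k) \<le> \<psi> k (v k)"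
proof (induction k)
  case 0
  show ?case by (simp add: A0 psi0 v0 bregman_def)
next
  case (Suc k)
  then have "0 \<le> A k" by simp
  note step = decrease[OF this]
  have "(A k + a (Suc k)) * f (x (Suc k))
        \<le> \<psi> k (v (Suc k)) + a (Suc k) * (f (y k) + gf (y k) \<bullet> (v (Suc k) - y k))"
    by (rule estimate_sequence_step[where \<psi> = "\<psi> k" and f = f, OF norm psi_quadratic_growth conjunct2[OF Suc.IH]
          f_y_le_f_x[of k] gradient_y_toward_v_nonneg[of k] \<open>0 \<le> A k\<close>
          conjunct1[OF step] conjunct2[OF conjunct2[OF step]]])
  moreover have "0 \<le> A k + a (Suc k)" using \<open>0 \<le> A k\<close> conjunct1[OF step] by simp
  ultimately show ?case unfolding Asuc psisuc by simp
qed

lemma sqrt_A_lower_bound: "real k / (2 * sqrt L) \<le> sqrt (A k)"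
proof (induction k)
  case (Suc k)
  have "0 \<le> A k" using A_nonneg_and_estimate by blast
  note step = decrease[OF this]
  have "sqrt (A k) + 1 / (2 * sqrt L) \<le> sqrt (A (Suc k))"
    unfolding Asuc using \<open>0 \<le> A k\<close> conjunct1[OF step] L_pos conjunct1[OF conjunct2[OF step]]
    by (rule sqrt_add_ge_if_le_mult_square)
  with Suc.IH show ?case by (simp add: add_divide_distrib)
qed (simp add: A0)

lemma A_lower_bound: "real k ^ 2 / (4 * L) \<le> A k"
proof -
  have "(real k / (2 * sqrt L))\<^sup>2 \<le> (sqrt (A k))\<^sup>2"
    using sqrt_A_lower_bound L_pos by (intro power_mono) auto
  then show ?thesis
    using A_nonneg_and_estimate[of k] L_pos by (simp add: power_divide power_mult_distrib)
qed

end

theorem mainTheorem1: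
  fixes nrm :: "'a::euclidean_space \<Rightarrow> real"
    and sh :: "'a \<Rightarrow> 'a"
    and d :: "'a \<Rightarrow> real" and gd :: "'a \<Rightarrow> 'a"
    and f :: "'a \<Rightarrow> real" and gf :: "'a \<Rightarrow> 'a" and L :: real
    and x v y :: "nat \<Rightarrow> 'a"
    and A a \<beta> h :: "nat \<Rightarrow> real"
    and \<psi> :: "nat \<Rightarrow> 'a \<Rightarrow> real"
  assumes norm: "is_norm nrm"
    and sharp: "is_sharp nrm sh"
    and prox: "is_prox nrm d gd"
    and smooth: "L_smooth nrm L f gf"
    and A0: "A 0 = 0"
    and v0: "v 0 = x 0"
    and psi0: "\<psi> 0 = (\<lambda>z. bregman d gd z (x 0))"
    and beta: "\<And>k. 0 \<le> \<beta> k \<and> \<beta> k \<le> 1 \<and>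
                 (\<forall>b. 0 \<le> b \<and> b \<le> 1 \<longrightarrow>
                    f (v k + \<beta> k *\<^sub>R (x k - v k)) \<le> f (v k + b *\<^sub>R (x k - v k)))"
    and ydef: "\<And>k. y k = v k + \<beta> k *\<^sub>R (x k - v k)"
    and nonstat: "\<And>k. gf (y k) \<noteq> 0"
    and options:
      "(\<forall>k. (\<forall>z. f (y k) + gf (y k) \<bullet> (x (Suc k) - y k) + L / 2 * (nrm (x (Suc k) - y k))\<^sup>2
                 \<le> f (y k) + gf (y k) \<bullet> (z - y k) + L / 2 * (nrm (z - y k))\<^sup>2)
             \<and> a (Suc k) > 0 \<and> (a (Suc k))\<^sup>2 / (A k + a (Suc k)) = 1 / L)
       \<or>
       (\<forall>k. h (Suc k) \<ge> 0
             \<and> (\<forall>t. t \<ge> 0 \<longrightarrow> f (y k - h (Suc k) *\<^sub>R sh (gf (y k))) \<le> f (y k - t *\<^sub>R sh (gf (y k))))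
             \<and> x (Suc k) = y k - h (Suc k) *\<^sub>R sh (gf (y k))
             \<and> f (y k) - (a (Suc k))\<^sup>2 / (2 * (A k + a (Suc k))) * (dual_norm nrm (gf (y k)))\<^sup>2 = f (x (Suc k))
             \<and> (\<forall>b. f (y k) - b\<^sup>2 / (2 * (A k + b)) * (dual_norm nrm (gf (y k)))\<^sup>2 = f (x (Suc k))
                    \<longrightarrow> b \<le> a (Suc k)))"
    and Asuc: "\<And>k. A (Suc k) = A k + a (Suc k)"
    and psisuc: "\<And>k. \<psi> (Suc k) = (\<lambda>z. \<psi> k z + a (Suc k) * (f (y k) + gf (y k) \<bullet> (z - y k)))"
    and vsuc: "\<And>k. \<forall>z. \<psi> (Suc k) (v (Suc k)) \<le> \<psi> (Suc k) z"
  shows "\<forall>k. A k * f (x k) \<le> \<psi> k (v k) \<and> \<psi> k (v k) = (INF z. \<psi> k z)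
             \<and> A k \<ge> real k ^ 2 / (4 * L)"
proof -
  have decrease: "0 < a (Suc k) \<and> A k + a (Suc k) \<le> L * (a (Suc k))\<^sup>2
      \<and> f (x (Suc k)) \<le> f (y k) - (a (Suc k))\<^sup>2 / (2 * (A k + a (Suc k))) * (dual_norm nrm (gf (y k)))\<^sup>2"
    if "0 \<le> A k" for k
    using options option_a_decrease[OF norm sharp smooth that]
      option_b_decrease[OF norm sharp smooth nonstat that]
    by blast
  interpret agmsdr nrm d gd f gf L x v y A a \<beta> \<psi>
    using norm prox smooth A0 v0 psi0 beta ydef decrease Asuc psisuc vsuc by unfold_locales
  show ?thesis using A_nonneg_and_estimate psi_min_eq_Inf A_lower_bound by blast
qed

end
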